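(* If $G$ and $H$ are connected graphs, then $\mathrm{gp}(G\boxtimes H)\le \min\{n(G)\,\mathrm{gp}(H),\ n(H)\,\mathrm{gp}(G)\}$.
   Context: All graphs are finite and simple; $n(G)=|V(G)|$. The strong product $G\boxtimes H$ has vertex set $V(G)\times V(H)$, with distinct $(g,h),(g',h')$ adjacent iff ($g=g'$ or $gg'\in E(G)$) and ($h=h'$ or $hh'\in E(H)$). For a connected graph $G$, a set $S\subseteq V(G)$ is a general position set if no three pairwise distinct vertices of $S$ lie on a common geodesic (shortest path); $\mathrm{gp}(G)$ is the maximum cardinality of a general position set. *)

theory Defs
  imports Main
begin

definition simple_graph :: "'a set \<Rightarrow> ('a \<Rightarrow> 'a \<Rightarrow> bool) \<Rightarrow> bool" where
  "simple_graph V E \<longleftrightarrow> finite V \<and> V \<noteq> {} \<and>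
     (\<forall>x y. E x y \<longrightarrow> x \<in> V \<and> y \<in> V) \<and>
     (\<forall>x y. E x y \<longrightarrow> E y x) \<and> (\<forall>x. \<not> E x x)"

definition walk :: "'a set \<Rightarrow> ('a \<Rightarrow> 'a \<Rightarrow> bool) \<Rightarrow> 'a list \<Rightarrow> bool" where
  "walk V E p \<longleftrightarrow> p \<noteq> [] \<and> set p \<subseteq> V \<and>
     (\<forall>i. Suc i < length p \<longrightarrow> E (p ! i) (p ! Suc i))"

definition walk_betw :: "'a set \<Rightarrow> ('a \<Rightarrow> 'a \<Rightarrow> bool) \<Rightarrow> 'a \<Rightarrow> 'a list \<Rightarrow> 'a \<Rightarrow> bool" where
  "walk_betw V E x p y \<longleftrightarrow> walk V E p \<and> hd p = x \<and> last p = y"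

definition connected_graph :: "'a set \<Rightarrow> ('a \<Rightarrow> 'a \<Rightarrow> bool) \<Rightarrow> bool" where
  "connected_graph V E \<longleftrightarrow> simple_graph V E \<and>
     (\<forall>x\<in>V. \<forall>y\<in>V. \<exists>p. walk_betw V E x p y)"

definition gdist :: "'a set \<Rightarrow> ('a \<Rightarrow> 'a \<Rightarrow> bool) \<Rightarrow> 'a \<Rightarrow> 'a \<Rightarrow> nat" where
  "gdist V E x y = (LEAST n. \<exists>p. walk_betw V E x p y \<and> length p = Suc n)"

definition geodesic :: "'a set \<Rightarrow> ('a \<Rightarrow> 'a \<Rightarrow> bool) \<Rightarrow> 'a list \<Rightarrow> bool" where
  "geodesic V E p \<longleftrightarrow> walk V E p \<and> length p = Suc (gdist V E (hd p) (last p))"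

definition general_position :: "'a set \<Rightarrow> ('a \<Rightarrow> 'a \<Rightarrow> bool) \<Rightarrow> 'a set \<Rightarrow> bool" where
  "general_position V E S \<longleftrightarrow> S \<subseteq> V \<and>
     (\<forall>u\<in>S. \<forall>v\<in>S. \<forall>w\<in>S. u \<noteq> v \<and> v \<noteq> w \<and> u \<noteq> w \<longrightarrow>
        \<not> (\<exists>p. geodesic V E p \<and> u \<in> set p \<and> v \<in> set p \<and> w \<in> set p))"

definition gp :: "'a set \<Rightarrow> ('a \<Rightarrow> 'a \<Rightarrow> bool) \<Rightarrow> nat" where
  "gp V E = Max {card S | S. general_position V E S}"

definition strong_prod_adj ::
  "('a \<Rightarrow> 'a \<Rightarrow> bool) \<Rightarrow> ('b \<Rightarrow> 'b \<Rightarrow> bool) \<Rightarrow> 'a \<times> 'b \<Rightarrow> 'a \<times> 'b \<Rightarrow> bool" where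
  "strong_prod_adj E F u v \<longleftrightarrow> u \<noteq> v \<and>
     (fst u = fst v \<or> E (fst u) (fst v)) \<and> (snd u = snd v \<or> F (snd u) (snd v))"

end

theory Submission
  imports Defs
begin

text \<open>Every layer \<open>{g} \<times> W\<close> of the strong product is an isometric copy of the factor graph:
  the inclusion \<open>b \<mapsto> (g, b)\<close> preserves edges, and the projection back to \<open>W\<close> never
  lengthens a walk, so geodesics of the factor are geodesics of the product. Hence a general
  position set of the product meets each layer in a general position set of the factor, and
  there are \<open>n(G)\<close> layers.\<close>

lemma walk_Cons_Cons: "walk V E (x # y # r) \<longleftrightarrow> x \<in> V \<and> E x y \<and> walk V E (y # r)"
  unfolding walk_def by (auto simp: nth_Cons split: nat.splits)

lemma gdist_less_length:
  assumes "walk_betw V E x p y"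
  shows "gdist V E x y < length p"
proof -
  have "p \<noteq> []" using assms by (simp add: walk_betw_def walk_def)
  then have "gdist V E x y \<le> length p - 1"
    using assms unfolding gdist_def by (intro Least_le exI[of _ p]) simp
  then show ?thesis using \<open>p \<noteq> []\<close> by (cases p) simp_all
qed

lemma shortest_walk_exists:
  assumes "walk_betw V E x p y"
  obtains q where "walk_betw V E x q y" "length q = Suc (gdist V E x y)"
proof -
  have "p \<noteq> []" using assms by (simp add: walk_betw_def walk_def)
  then have "\<exists>n q. walk_betw V E x q y \<and> length q = Suc n"
    using assms by (intro exI[of _ "length p - 1"] exI[of _ p]) simp
  then have "\<exists>q. walk_betw V E x q y \<and> length q = Suc (gdist V E x y)"
    unfolding gdist_def by (rule LeastI_ex)
  then show thesis using that by blast
qed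

definition graph_hom ::
  "'b set \<Rightarrow> ('b \<Rightarrow> 'b \<Rightarrow> bool) \<Rightarrow> 'a set \<Rightarrow> ('a \<Rightarrow> 'a \<Rightarrow> bool) \<Rightarrow> ('b \<Rightarrow> 'a) \<Rightarrow> bool" where
  "graph_hom W F U A \<iota> \<longleftrightarrow> (\<forall>b\<in>W. \<iota> b \<in> U) \<and> (\<forall>a b. F a b \<longrightarrow> A (\<iota> a) (\<iota> b))"

definition weak_graph_hom ::
  "'a set \<Rightarrow> ('a \<Rightarrow> 'a \<Rightarrow> bool) \<Rightarrow> 'b set \<Rightarrow> ('b \<Rightarrow> 'b \<Rightarrow> bool) \<Rightarrow> ('a \<Rightarrow> 'b) \<Rightarrow> bool" where
  "weak_graph_hom U A W F \<pi> \<longleftrightarrow>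
     (\<forall>u\<in>U. \<pi> u \<in> W) \<and> (\<forall>u v. A u v \<longrightarrow> \<pi> u = \<pi> v \<or> F (\<pi> u) (\<pi> v))"

lemma walk_map_graph_hom:
  assumes "graph_hom W F U A \<iota>" and "walk W F q"
  shows "walk U A (map \<iota> q)"
  using assms(2)
proof (induction q rule: induct_list012)
  case (3 x y r)
  then show ?case using assms(1) by (simp add: walk_Cons_Cons graph_hom_def)
qed (use assms(1) in \<open>auto simp: walk_def graph_hom_def\<close>)

lemma walk_weak_graph_hom_image:
  assumes "weak_graph_hom U A W F \<pi>" and "walk U A p"
  shows "\<exists>q. walk_betw W F (\<pi> (hd p)) q (\<pi> (last p)) \<and> length q \<le> length p"
  using assms(2)
proof (induction p rule: induct_list012)
  case (2 x)
  then show ?case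
    using assms(1) by (intro exI[of _ "[\<pi> x]"]) (simp add: walk_betw_def walk_def weak_graph_hom_def)
next
  case (3 x y r)
  then have x: "x \<in> U" "A x y" and "walk U A (y # r)" by (simp_all add: walk_Cons_Cons)
  then obtain q where q: "walk_betw W F (\<pi> y) q (\<pi> (last (y # r)))" "length q \<le> length (y # r)"
    using "3.IH"(2) by auto
  then obtain r' where q_Cons: "q = \<pi> y # r'"
    by (cases q) (auto simp: walk_betw_def walk_def)
  show ?case
  proof (cases "\<pi> x = \<pi> y")
    case True
    then show ?thesis using q by (intro exI[of _ q]) simp
  next
    case False
    then have "F (\<pi> x) (\<pi> y)"
      using assms(1) x unfolding weak_graph_hom_def by blast
    then have "walk W F (\<pi> x # q)"
      using assms(1) x q q_Cons by (simp add: weak_graph_hom_def walk_betw_def walk_Cons_Cons)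
    then show ?thesis using q q_Cons by (intro exI[of _ "\<pi> x # q"]) (simp add: walk_betw_def)
  qed
qed (simp add: walk_def)

text \<open>Projecting a shortest walk of \<open>U\<close> yields a walk of \<open>W\<close> that is no longer, so \<open>\<iota>\<close>
  preserves distances.\<close>

lemma geodesic_map_retract:
  assumes hom: "graph_hom W F U A \<iota>" and weak: "weak_graph_hom U A W F \<pi>"
    and retract: "\<forall>b\<in>W. \<pi> (\<iota> b) = b"
    and geo: "geodesic W F q"
  shows "geodesic U A (map \<iota> q)"
proof -
  define a b where "a = hd q" and "b = last q"
  have q: "walk_betw W F a q b" "length q = Suc (gdist W F a b)"
    using geo by (simp_all add: geodesic_def walk_betw_def a_def b_def)
  then have "a \<in> W" "b \<in> W" and "q \<noteq> []"
    by (auto simp: walk_betw_def walk_def)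
  have lifted: "walk_betw U A (\<iota> a) (map \<iota> q) (\<iota> b)"
    using walk_map_graph_hom[OF hom] q \<open>q \<noteq> []\<close>
    by (simp add: walk_betw_def hd_map last_map)
  then obtain p where p: "walk_betw U A (\<iota> a) p (\<iota> b)" "length p = Suc (gdist U A (\<iota> a) (\<iota> b))"
    by (rule shortest_walk_exists)
  then obtain r where "walk_betw W F a r b" "length r \<le> length p"
    using walk_weak_graph_hom_image[OF weak] retract \<open>a \<in> W\<close> \<open>b \<in> W\<close>
    by (fastforce simp: walk_betw_def)
  then have "length q \<le> length p"
    using gdist_less_length q(2) by fastforce
  moreover have "length p \<le> length q"
    using gdist_less_length[OF lifted] p(2) by simp
  ultimately show ?thesis
    using lifted p(2) by (simp add: geodesic_def walk_betw_def)
qed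

lemma general_position_vimage_retract:
  assumes hom: "graph_hom W F U A \<iota>" and weak: "weak_graph_hom U A W F \<pi>"
    and retract: "\<forall>b\<in>W. \<pi> (\<iota> b) = b"
    and S: "general_position U A S"
  shows "general_position W F {b\<in>W. \<iota> b \<in> S}"
  unfolding general_position_def
proof (intro conjI ballI impI notI)
  fix u v w
  assume uvw: "u \<in> {b\<in>W. \<iota> b \<in> S}" "v \<in> {b\<in>W. \<iota> b \<in> S}" "w \<in> {b\<in>W. \<iota> b \<in> S}"
    and uvw_distinct: "u \<noteq> v \<and> v \<noteq> w \<and> u \<noteq> w"
    and "\<exists>p. geodesic W F p \<and> u \<in> set p \<and> v \<in> set p \<and> w \<in> set p"
  then obtain p where p: "geodesic W F p" "u \<in> set p" "v \<in> set p" "w \<in> set p" by blast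
  have "inj_on \<iota> W" using retract by (metis inj_on_inverseI)
  then have "\<iota> u \<noteq> \<iota> v" "\<iota> v \<noteq> \<iota> w" "\<iota> u \<noteq> \<iota> w"
    using uvw uvw_distinct by (auto dest: inj_onD)
  moreover have "\<iota> u \<in> S" "\<iota> v \<in> S" "\<iota> w \<in> S" using uvw by simp_all
  ultimately have "\<not> (\<exists>p. geodesic U A p \<and> \<iota> u \<in> set p \<and> \<iota> v \<in> set p \<and> \<iota> w \<in> set p)"
    using S unfolding general_position_def by blast
  moreover have "geodesic U A (map \<iota> p)"
    using hom weak retract p(1) by (rule geodesic_map_retract)
  moreover have "\<iota> u \<in> set (map \<iota> p)" "\<iota> v \<in> set (map \<iota> p)" "\<iota> w \<in> set (map \<iota> p)"
    using p(2-4) by simp_all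
  ultimately show False by blast
qed auto

lemma finite_general_position_cards:
  "finite V \<Longrightarrow> finite {card S | S. general_position V E S}"
  by (rule finite_subset[of _ "card ` Pow V"]) (auto simp: general_position_def)

lemma card_le_gp:
  "finite V \<Longrightarrow> general_position V E S \<Longrightarrow> card S \<le> gp V E"
  unfolding gp_def by (intro Max_ge finite_general_position_cards) auto

lemma gp_le:
  assumes "finite V" and "\<And>S. general_position V E S \<Longrightarrow> card S \<le> k"
  shows "gp V E \<le> k"
proof -
  have "general_position V E {}" by (simp add: general_position_def)
  then show ?thesis
    using assms unfolding gp_def by (subst Max_le_iff) (auto intro: finite_general_position_cards)
qed

lemma gp_le_card_mult_gp_of_retract_cover:
  assumes "finite I" and "finite W"
    and hom: "\<And>i. i \<in> I \<Longrightarrow> graph_hom W F U A (\<iota> i)"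
    and weak: "weak_graph_hom U A W F \<pi>"
    and retract: "\<And>i. i \<in> I \<Longrightarrow> \<forall>b\<in>W. \<pi> (\<iota> i b) = b"
    and cover: "U \<subseteq> (\<Union>i\<in>I. \<iota> i ` W)"
  shows "gp U A \<le> card I * gp W F"
proof (rule gp_le)
  show "finite U" using assms(1,2) by (intro finite_subset[OF cover]) simp
  fix S assume S: "general_position U A S"
  define T where "T i = {b\<in>W. \<iota> i b \<in> S}" for i
  have "S \<subseteq> (\<Union>i\<in>I. \<iota> i ` T i)"
    using S cover unfolding general_position_def T_def by blast
  then have "card S \<le> card (\<Union>i\<in>I. \<iota> i ` T i)"
    using assms(1,2) by (intro card_mono) (auto simp: T_def)
  also have "\<dots> \<le> (\<Sum>i\<in>I. card (\<iota> i ` T i))"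
    using assms(1) by (rule card_UN_le)
  also have "\<dots> \<le> (\<Sum>i\<in>I. card (T i))"
    by (intro sum_mono card_image_le) (simp add: T_def assms(2))
  also have "\<dots> \<le> (\<Sum>i\<in>I. gp W F)"
    using general_position_vimage_retract[OF hom weak retract S] assms(2)
    by (intro sum_mono card_le_gp) (simp_all add: T_def)
  finally show "card S \<le> card I * gp W F" by simp
qed

theorem corollary4p1:
  fixes V :: "'a set" and E :: "'a \<Rightarrow> 'a \<Rightarrow> bool"
    and W :: "'b set" and F :: "'b \<Rightarrow> 'b \<Rightarrow> bool"
  assumes "connected_graph V E" and "connected_graph W F"
  shows "gp (V \<times> W) (strong_prod_adj E F)
           \<le> min (card V * gp W F) (card W * gp V E)"
proof -
  have fin: "finite V" "finite W" and irrefl: "\<And>x. \<not> E x x" "\<And>y. \<not> F y y"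
    using assms by (auto simp: connected_graph_def simple_graph_def)
  have "gp (V \<times> W) (strong_prod_adj E F) \<le> card V * gp W F"
    using fin irrefl(2)
    by (intro gp_le_card_mult_gp_of_retract_cover[where \<iota> = Pair and \<pi> = snd])
       (auto simp: graph_hom_def weak_graph_hom_def strong_prod_adj_def)
  moreover have "gp (V \<times> W) (strong_prod_adj E F) \<le> card W * gp V E"
    using fin irrefl(1)
    by (intro gp_le_card_mult_gp_of_retract_cover[where \<iota> = "\<lambda>h a. (a, h)" and \<pi> = fst])
       (auto simp: graph_hom_def weak_graph_hom_def strong_prod_adj_def)
  ultimately show ?thesis by simp
qed

end
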